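(* Let $\theta\in M_{k,d}([0,\infty))$ with rows $\theta_j$, $\beta>0$, $r\in(0,\infty)^k$. Suppose $\nu$ is a positive measure on $\mathbb{S}^d$ with total mass $\prod_{j=1}^k(\beta r_j)^{-1}$ satisfying $\prod_{j=1}^k(\operatorname{id}-e^{-\beta s_jr_j}R_{s_j\theta_j^T*})(\nu)\ge0$ for all $s\in[0,\infty)^k$. Let $\mu_\nu$ be the positive measure with \[ \int f\,d\mu_\nu=\lim_{s_k\to0^+}\cdots\lim_{s_1\to0^+}\frac{1}{s_k\cdots s_1}\int f\,d\Big(\prod_{j=1}^k\big(\operatorname{id}-e^{-\beta s_jr_j}R_{s_j\theta_j^T*}\big)(\nu)\Big), \] and for a positive measure $\mu$ let $\nu_\mu$ be the measure with $\int f\,d\nu_\mu=\int_{[0,\infty)^k}e^{-\beta w^Tr}\int_{\mathbb{S}^d}f(x+\theta^Tw)\,d\mu(x)\,dw$. Then $\nu=\nu_{\mu_\nu}$.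
   Context: $\mathbb{S}^d=\mathbb{R}^d/\mathbb{Z}^d$; functions on $\mathbb{S}^d$ are $\mathbb{Z}^d$-periodic functions on $\mathbb{R}^d$; $f$ ranges over $C(\mathbb{S}^d)$. Vectors are columns, $A^T$ transpose. $R_y(x)=x+y$ and $R_{y*}$ is pushforward of measures ($\int f\,dR_{y*}\mu=\int f\circ R_y\,d\mu$). "$\ge0$" means positive measure. (The iterated limits defining $\mu_\nu$ exist and define a positive measure.) *)

theory Defs
  imports "HOL-Analysis.Analysis"
begin

text \<open>Functions on the torus S^d = R^d / Z^d are Z^d-periodic functions on R^d.\<close>
definition periodic_fn :: "(real^'d \<Rightarrow> real) \<Rightarrow> bool" where
  "periodic_fn f \<longleftrightarrow> (\<forall>x z. (\<forall>i. z $ i \<in> \<int>) \<longrightarrow> f (x + z) = f x)"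

definition torus_test :: "(real^'d \<Rightarrow> real) \<Rightarrow> bool" where
  "torus_test f \<longleftrightarrow> continuous_on UNIV f \<and> periodic_fn f"

text \<open>(Signed) measures on S^d are represented by the functionals they induce on C(S^d).
  The operator id - exp(-beta s_j r_j) R_{s_j theta_j *} acting on such a functional:
  integral of f against R_{y*} Phi is Phi applied to f o R_y.\<close>
definition shift_op ::
  "real \<Rightarrow> (nat \<Rightarrow> real) \<Rightarrow> (nat \<Rightarrow> real^'d) \<Rightarrow> (nat \<Rightarrow> real) \<Rightarrow> nat
     \<Rightarrow> ((real^'d \<Rightarrow> real) \<Rightarrow> real) \<Rightarrow> ((real^'d \<Rightarrow> real) \<Rightarrow> real)" where
  "shift_op \<beta> r \<theta> s j \<Phi> = (\<lambda>f. \<Phi> f - exp (- (\<beta> * s j * r j)) * \<Phi> (\<lambda>x. f (x + s j *\<^sub>R \<theta> j)))"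

text \<open>The product over j = 0..n-1 of the operators above (they commute).\<close>
fun prod_ops ::
  "real \<Rightarrow> (nat \<Rightarrow> real) \<Rightarrow> (nat \<Rightarrow> real^'d) \<Rightarrow> (nat \<Rightarrow> real) \<Rightarrow> nat
     \<Rightarrow> ((real^'d \<Rightarrow> real) \<Rightarrow> real) \<Rightarrow> ((real^'d \<Rightarrow> real) \<Rightarrow> real)" where
  "prod_ops \<beta> r \<theta> s 0 \<Phi> = \<Phi>"
| "prod_ops \<beta> r \<theta> s (Suc n) \<Phi> = shift_op \<beta> r \<theta> s n (prod_ops \<beta> r \<theta> s n \<Phi>)"

text \<open>Iterated one-sided limit: has_iter_lim n G L means
  lim_{s_{n-1} -> 0+} ... lim_{s_0 -> 0+} G(s) = L (innermost limit in s_0),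
  where every inner limit exists for all sufficiently small positive values of the outer variables.\<close>
fun has_iter_lim :: "nat \<Rightarrow> ((nat \<Rightarrow> real) \<Rightarrow> real) \<Rightarrow> real \<Rightarrow> bool" where
  "has_iter_lim 0 G L \<longleftrightarrow> G (\<lambda>_. 0) = L"
| "has_iter_lim (Suc n) G L \<longleftrightarrow>
     (\<exists>h. (\<forall>\<^sub>F t in at_right 0. has_iter_lim n (\<lambda>s. G (s(n := t))) (h t))
          \<and> (h \<longlongrightarrow> L) (at_right 0))"

end

theory Submission
  imports Defs "HOL-Probability.Sinc_Integral"
begin

text \<open>Both sides are integrals of continuous periodic functions against finite measures, and
  trigonometric polynomials are uniformly dense among these (Stone--Weierstrass through the
  embedding of the torus as a product of circles), so it suffices to compare them on the characters
  e_n(x) = exp(2\<pi>i n\<sqdot>x), n \<in> \<int>^d. The j-th factor id - exp(-\<beta> s_j r_j) R_{s_j \<theta>_j*} multiplies the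
  n-th Fourier coefficient by 1 - exp(-s_j c_j) with c_j = \<beta> r_j - 2\<pi>i n\<sqdot>\<theta>_j, so the iterated limit
  defining \<mu> gives \<mu>^(n) = (\<Prod>_j c_j) \<nu>^(n). On the other side the shift by \<theta>^T w only rotates the
  phase of e_n, and \<integral>_{[0,\<infinity>)^k} exp(-w\<sqdot>c) dw = \<Prod>_j 1/c_j turns \<mu>^(n) back into \<nu>^(n).\<close>

section \<open>Bounded continuous functions and finite Borel measures\<close>

lemma integrable_bounded_continuous:
  fixes f :: "'a::topological_space \<Rightarrow> real"
  assumes "finite_measure M" "sets M = sets borel" "continuous_on UNIV f" "\<And>x. \<bar>f x\<bar> \<le> B"
  shows "integrable M f"
proof -
  interpret finite_measure M by fact
  have "f \<in> borel_measurable M"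
    using borel_measurable_continuous_onI[OF assms(3)] measurable_cong_sets[OF assms(2) refl] by blast
  show ?thesis by (rule integrable_const_bound[where B=B]) (use assms(4) \<open>f \<in> borel_measurable M\<close> in auto)
qed

lemma integral_tendsto_bounded_continuous:
  fixes f :: "'a::topological_space \<Rightarrow> real"
  assumes "finite_measure M" "sets M = sets borel" "continuous_on UNIV f"
    "\<And>m. continuous_on UNIV (h m)" "\<And>m x. \<bar>h m x\<bar> \<le> B" "\<And>x. (\<lambda>m. h m x) \<longlonglongrightarrow> f x"
  shows "(\<lambda>m. \<integral>x. h m x \<partial>M) \<longlonglongrightarrow> (\<integral>x. f x \<partial>M)"
proof (rule integral_dominated_convergence[where w="\<lambda>_. B"])
  interpret finite_measure M by fact
  show "f \<in> borel_measurable M" "h m \<in> borel_measurable M" for m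
    using borel_measurable_continuous_onI[OF assms(3)] borel_measurable_continuous_onI[OF assms(4)]
      measurable_cong_sets[OF assms(2) refl] by blast+
  show "integrable M (\<lambda>_. B)" by simp
qed (use assms(5,6) in simp_all)

lemma integrable_shift_bounded_continuous:
  fixes f :: "'a::real_normed_vector \<Rightarrow> real"
  assumes "finite_measure M" "sets M = sets borel" "continuous_on UNIV f" "\<And>x. \<bar>f x\<bar> \<le> B"
  shows "integrable M (\<lambda>x. f (x + y))"
  by (rule integrable_bounded_continuous[OF assms(1,2), where B=B])
    (auto intro!: continuous_on_compose2[OF assms(3)] continuous_intros assms(4))

lemma abs_integral_le_bound:
  fixes g :: "'a \<Rightarrow> real"
  assumes "finite_measure M" "integrable M g" "\<And>x. \<bar>g x\<bar> \<le> B"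
  shows "\<bar>\<integral>x. g x \<partial>M\<bar> \<le> B * measure M (space M)"
proof -
  interpret finite_measure M by fact
  have "\<bar>\<integral>x. g x \<partial>M\<bar> \<le> (\<integral>x. \<bar>g x\<bar> \<partial>M)"
    using integral_norm_bound[of M g] by simp
  also have "\<dots> \<le> (\<integral>x. B \<partial>M)"
    using assms(2,3) by (intro integral_mono) auto
  finally show ?thesis by (simp add: mult.commute)
qed

section \<open>Fourier coefficients of functionals on the torus\<close>

text \<open>For integration against \<nu> this is \<integral> exp(i(2\<pi> n\<sqdot>x + c)) d\<nu>; the phase c is carried along
  because the translations in \<open>shift_op\<close> change it.\<close>
definition fourier_coeff :: "real^'d \<Rightarrow> real \<Rightarrow> ((real^'d \<Rightarrow> real) \<Rightarrow> real) \<Rightarrow> complex" where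
  "fourier_coeff n c \<Psi> =
     Complex (\<Psi> (\<lambda>x. cos (2*pi*(n \<bullet> x) + c))) (\<Psi> (\<lambda>x. sin (2*pi*(n \<bullet> x) + c)))"

lemma Re_fourier_coeff [simp]: "Re (fourier_coeff n c \<Psi>) = \<Psi> (\<lambda>x. cos (2*pi*(n \<bullet> x) + c))"
  by (simp add: fourier_coeff_def)

lemma fourier_coeff_integral:
  fixes M :: "(real^'d) measure"
  assumes "finite_measure M" "sets M = sets borel"
  shows "fourier_coeff n c (\<lambda>g. \<integral>x. g x \<partial>M) = cis c * fourier_coeff n 0 (\<lambda>g. \<integral>x. g x \<partial>M)"
proof -
  have "integrable M (\<lambda>x. cos (2*pi*(n \<bullet> x)))" "integrable M (\<lambda>x. sin (2*pi*(n \<bullet> x)))"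
    by (rule integrable_bounded_continuous[OF assms, where B=1]; auto intro!: continuous_intros)+
  moreover have "(\<lambda>x. cos (2*pi*(n \<bullet> x) + c)) = (\<lambda>x. cos c * cos (2*pi*(n \<bullet> x)) - sin c * sin (2*pi*(n \<bullet> x)))"
    "(\<lambda>x. sin (2*pi*(n \<bullet> x) + c)) = (\<lambda>x. cos c * sin (2*pi*(n \<bullet> x)) + sin c * cos (2*pi*(n \<bullet> x)))"
    by (simp_all add: cos_add sin_add mult.commute)
  ultimately show ?thesis
    by (simp add: fourier_coeff_def complex_eq_iff)
qed

text \<open>The j-th factor of \<open>prod_ops\<close> acts on the n-th Fourier coefficient as multiplication by
  1 - exp(-s_j c_j), where c_j is the following number.\<close>
definition char_exponent :: "real \<Rightarrow> (nat \<Rightarrow> real) \<Rightarrow> (nat \<Rightarrow> real^'d) \<Rightarrow> real^'d \<Rightarrow> nat \<Rightarrow> complex" where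
  "char_exponent \<beta> r \<theta> n j = Complex (\<beta> * r j) (- (2*pi*(n \<bullet> \<theta> j)))"

lemma Re_char_exponent [simp]: "Re (char_exponent \<beta> r \<theta> n j) = \<beta> * r j"
  by (simp add: char_exponent_def)

lemma exp_char_exponent:
  "exp (- (complex_of_real t * char_exponent \<beta> r \<theta> n j)) =
     complex_of_real (exp (- (\<beta> * t * r j))) * cis (2*pi*(t * (n \<bullet> \<theta> j)))"
proof -
  have "- (complex_of_real t * char_exponent \<beta> r \<theta> n j) = Complex (- (\<beta> * t * r j)) (2*pi*(t * (n \<bullet> \<theta> j)))"
    by (simp add: char_exponent_def complex_eq_iff)
  then show ?thesis by (simp add: exp_eq_polar)
qed

lemma prod_exp_char_exponent:
  "(\<Prod>j<k. exp (- (complex_of_real (w j) * char_exponent \<beta> r \<theta> n j))) =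
     complex_of_real (exp (- (\<beta> * (\<Sum>j<k. w j * r j)))) * cis (2*pi*(n \<bullet> (\<Sum>j<k. w j *\<^sub>R \<theta> j)))"
proof -
  let ?S = "\<Sum>j<k. - (complex_of_real (w j) * char_exponent \<beta> r \<theta> n j)"
  have "(\<Prod>j<k. exp (- (complex_of_real (w j) * char_exponent \<beta> r \<theta> n j))) = exp ?S"
    by (simp add: exp_sum)
  also have "\<dots> = complex_of_real (exp (Re ?S)) * cis (Im ?S)"
    by (rule exp_eq_polar)
  also have "Re ?S = - (\<beta> * (\<Sum>j<k. w j * r j))"
    by (simp add: Re_sum sum_distrib_left sum_negf algebra_simps)
  also have "Im ?S = 2*pi*(n \<bullet> (\<Sum>j<k. w j *\<^sub>R \<theta> j))"
    by (simp add: Im_sum char_exponent_def sum_distrib_left inner_sum_right algebra_simps)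
  finally show ?thesis .
qed

lemma fourier_coeff_shift_op:
  "fourier_coeff n c (shift_op \<beta> r \<theta> s j \<Psi>) =
     fourier_coeff n c \<Psi> -
     complex_of_real (exp (- (\<beta> * s j * r j))) * fourier_coeff n (c + 2*pi*(s j * (n \<bullet> \<theta> j))) \<Psi>"
proof -
  have "(\<lambda>x. cos (2*pi*(n \<bullet> (x + s j *\<^sub>R \<theta> j)) + c)) =
      (\<lambda>x. cos (2*pi*(n \<bullet> x) + (c + 2*pi*(s j * (n \<bullet> \<theta> j)))))"
    "(\<lambda>x. sin (2*pi*(n \<bullet> (x + s j *\<^sub>R \<theta> j)) + c)) =
      (\<lambda>x. sin (2*pi*(n \<bullet> x) + (c + 2*pi*(s j * (n \<bullet> \<theta> j)))))"
    by (simp_all add: inner_add_right algebra_simps)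
  then show ?thesis
    unfolding fourier_coeff_def shift_op_def by (simp add: complex_eq_iff)
qed

lemma fourier_coeff_prod_ops:
  assumes "\<And>c. fourier_coeff n c \<Phi> = cis c * fourier_coeff n 0 \<Phi>"
  shows "fourier_coeff n c (prod_ops \<beta> r \<theta> s m \<Phi>) =
    cis c * fourier_coeff n 0 \<Phi> * (\<Prod>j<m. 1 - exp (- (complex_of_real (s j) * char_exponent \<beta> r \<theta> n j)))"
proof (induction m arbitrary: c)
  case 0
  show ?case using assms[of c] by simp
next
  case (Suc m)
  define P where "P = (\<Prod>j<m. 1 - exp (- (complex_of_real (s j) * char_exponent \<beta> r \<theta> n j)))"
  define A where "A = fourier_coeff n 0 \<Phi>"
  define e where "e = exp (- (\<beta> * s m * r m))"
  define \<alpha> where "\<alpha> = 2*pi*(s m * (n \<bullet> \<theta> m))"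
  have IH: "fourier_coeff n c' (prod_ops \<beta> r \<theta> s m \<Phi>) = cis c' * A * P" for c'
    unfolding P_def A_def by (rule Suc.IH)
  have "fourier_coeff n c (prod_ops \<beta> r \<theta> s (Suc m) \<Phi>) = cis c * A * P - complex_of_real e * (cis (c + \<alpha>) * A * P)"
    by (simp only: prod_ops.simps fourier_coeff_shift_op IH e_def \<alpha>_def)
  also have "cis (c + \<alpha>) = cis c * cis \<alpha>" by (simp only: cis_mult)
  also have "cis c * A * P - complex_of_real e * (cis c * cis \<alpha> * A * P) =
      cis c * A * (P * (1 - complex_of_real e * cis \<alpha>))"
    by (simp only: ring_distribs mult_ac mult_1_left)
  also have "complex_of_real e * cis \<alpha> = exp (- (complex_of_real (s m) * char_exponent \<beta> r \<theta> n m))"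
    unfolding e_def \<alpha>_def by (rule exp_char_exponent[symmetric])
  finally show ?case by (simp only: P_def A_def prod.lessThan_Suc)
qed

section \<open>Iterated limits of Fourier multipliers\<close>

lemma tendsto_one_minus_exp_div:
  fixes c :: complex
  shows "((\<lambda>t. (1 - exp (- (complex_of_real t * c))) / complex_of_real t) \<longlongrightarrow> c) (at_right 0)"
proof -
  have "((\<lambda>z::complex. 1 - exp (- (z * c))) has_field_derivative c) (at 0)"
    by (auto intro!: derivative_eq_intros)
  then have lim: "((\<lambda>z::complex. (1 - exp (- (z * c))) / z) \<longlongrightarrow> c) (at 0)"
    by (simp add: has_field_derivative_iff)
  have "filterlim complex_of_real (at 0) (at_right (0::real))"
  proof (rule filterlim_atI)
    show "(complex_of_real \<longlongrightarrow> 0) (at_right 0)"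
      using tendsto_of_real[OF tendsto_ident_at[of "0::real" "{0<..}"]] by simp
  qed (simp add: eventually_at_right_less eventually_mono[OF eventually_at_right_less])
  from filterlim_compose[OF lim this] show ?thesis by (simp add: o_def)
qed

lemma has_iter_lim_Re_prod:
  fixes g :: "nat \<Rightarrow> real \<Rightarrow> complex"
  assumes "\<And>j. j < m \<Longrightarrow> (g j \<longlongrightarrow> a j) (at_right 0)"
    and "has_iter_lim m (\<lambda>s. Re (z * (\<Prod>j<m. g j (s j)))) L"
  shows "L = Re (z * (\<Prod>j<m. a j))"
  using assms
proof (induction m arbitrary: z L)
  case 0
  then show ?case by simp
next
  case (Suc m)
  from Suc.prems(2) obtain h
    where ev: "\<forall>\<^sub>F t in at_right 0. has_iter_lim m (\<lambda>s. Re (z * (\<Prod>j<Suc m. g j ((s(m := t)) j)))) (h t)"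
      and hL: "(h \<longlongrightarrow> L) (at_right 0)" by auto
  have split: "(\<Prod>j<Suc m. g j ((s(m := t)) j)) = g m t * (\<Prod>j<m. g j (s j))" for s t
  proof -
    have "(\<Prod>j<m. g j ((s(m := t)) j)) = (\<Prod>j<m. g j (s j))" by (rule prod.cong) auto
    then show ?thesis by (simp add: mult.commute)
  qed
  have "\<forall>\<^sub>F t in at_right 0. Re ((z * g m t) * (\<Prod>j<m. a j)) = h t"
    using ev
  proof eventually_elim
    case (elim t)
    then have "has_iter_lim m (\<lambda>s. Re ((z * g m t) * (\<Prod>j<m. g j (s j)))) (h t)"
      unfolding split by (simp only: mult.assoc)
    then have "h t = Re ((z * g m t) * (\<Prod>j<m. a j))"
      by (rule Suc.IH[rotated]) (simp add: Suc.prems(1))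
    then show ?case by simp
  qed
  moreover have "((\<lambda>t. Re ((z * g m t) * (\<Prod>j<m. a j))) \<longlongrightarrow> Re ((z * a m) * (\<Prod>j<m. a j))) (at_right 0)"
    using Suc.prems(1) by (intro tendsto_intros) auto
  ultimately have "(h \<longlongrightarrow> Re ((z * a m) * (\<Prod>j<m. a j))) (at_right 0)"
    by (rule Lim_transform_eventually[rotated])
  then have "L = Re ((z * a m) * (\<Prod>j<m. a j))"
    by (rule tendsto_unique[OF _ hL, rotated]) (simp add: trivial_limit_at_right_real)
  then show ?case by (simp add: prod.lessThan_Suc mult_ac)
qed

lemma complex_eqI_Re_cis_mult:
  assumes "\<And>c. Re (cis c * z) = Re (cis c * w)"
  shows "z = w"
proof -
  have "cis (- (pi/2)) = - \<i>" by (simp add: complex_eq_iff)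
  then show ?thesis using assms[of 0] assms[of "- (pi/2)"] by (simp add: complex_eq_iff)
qed

lemma fourier_coeff_iter_lim:
  fixes \<nu> \<mu> :: "(real^'d) measure"
  assumes \<nu>: "finite_measure \<nu>" "sets \<nu> = sets borel"
    and \<mu>: "finite_measure \<mu>" "sets \<mu> = sets borel"
    and lim: "\<And>c. has_iter_lim k
        (\<lambda>s. (1 / (\<Prod>j<k. s j)) * prod_ops \<beta> r \<theta> s k (\<lambda>g. \<integral>x. g x \<partial>\<nu>) (\<lambda>x. cos (2*pi*(n \<bullet> x) + c)))
        (\<integral>x. cos (2*pi*(n \<bullet> x) + c) \<partial>\<mu>)"
  shows "fourier_coeff n 0 (\<lambda>g. \<integral>x. g x \<partial>\<mu>) =
    (\<Prod>j<k. char_exponent \<beta> r \<theta> n j) * fourier_coeff n 0 (\<lambda>g. \<integral>x. g x \<partial>\<nu>)"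
proof (rule complex_eqI_Re_cis_mult)
  fix c
  define Z where "Z = fourier_coeff n 0 (\<lambda>g. \<integral>x. g x \<partial>\<nu>)"
  define g where "g = (\<lambda>j t. (1 - exp (- (complex_of_real t * char_exponent \<beta> r \<theta> n j))) / complex_of_real t)"
  define E where "E = (\<lambda>s. \<Prod>j<k. 1 - exp (- (complex_of_real (s j) * char_exponent \<beta> r \<theta> n j)))"
  have "prod_ops \<beta> r \<theta> s k (\<lambda>g. \<integral>x. g x \<partial>\<nu>) (\<lambda>x. cos (2*pi*(n \<bullet> x) + c)) = Re (cis c * Z * E s)" for s
    using arg_cong[OF fourier_coeff_prod_ops[OF fourier_coeff_integral[OF \<nu>], of n c \<beta> r \<theta> s k], of Re]
    unfolding Re_fourier_coeff Z_def E_def .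
  moreover have "Re (cis c * Z * (\<Prod>j<k. g j (s j))) = Re (cis c * Z * E s) / (\<Prod>j<k. s j)" for s
    unfolding g_def E_def prod_dividef by (simp only: times_divide_eq_right Re_divide_of_real of_real_prod[symmetric])
  ultimately have "(1 / (\<Prod>j<k. s j)) * prod_ops \<beta> r \<theta> s k (\<lambda>g. \<integral>x. g x \<partial>\<nu>) (\<lambda>x. cos (2*pi*(n \<bullet> x) + c))
      = Re (cis c * Z * (\<Prod>j<k. g j (s j)))" for s
    by (simp only: mult.commute[of "1 / _"] times_divide_eq_right mult_1_right)
  then have "has_iter_lim k (\<lambda>s. Re (cis c * Z * (\<Prod>j<k. g j (s j)))) (\<integral>x. cos (2*pi*(n \<bullet> x) + c) \<partial>\<mu>)"
    using lim[of c] by (simp only:)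
  then have "(\<integral>x. cos (2*pi*(n \<bullet> x) + c) \<partial>\<mu>) = Re (cis c * Z * (\<Prod>j<k. char_exponent \<beta> r \<theta> n j))"
    by (rule has_iter_lim_Re_prod[rotated]) (simp add: g_def tendsto_one_minus_exp_div)
  moreover have "Re (cis c * fourier_coeff n 0 (\<lambda>g. \<integral>x. g x \<partial>\<mu>)) = (\<integral>x. cos (2*pi*(n \<bullet> x) + c) \<partial>\<mu>)"
    by (simp only: fourier_coeff_integral[OF \<mu>, symmetric] Re_fourier_coeff)
  ultimately show "Re (cis c * fourier_coeff n 0 (\<lambda>g. \<integral>x. g x \<partial>\<mu>)) =
      Re (cis c * ((\<Prod>j<k. char_exponent \<beta> r \<theta> n j) * Z))"
    by (simp only: mult.assoc mult.commute[of Z])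
qed

section \<open>Exponential integrals over the orthant\<close>

abbreviation orthant :: "nat \<Rightarrow> (nat \<Rightarrow> real) measure" where
  "orthant k \<equiv> PiM {..<k} (\<lambda>_. restrict_space lborel {0..})"

lemma
  fixes c :: complex
  assumes c: "0 < Re c"
  shows integrable_exp_neg_halfline:
      "integrable (restrict_space lborel {0..}) (\<lambda>t. exp (- (complex_of_real t * c)))"
    and integral_exp_neg_halfline:
      "(\<integral>t. exp (- (complex_of_real t * c)) \<partial>restrict_space lborel {0..}) = 1 / c"
proof -
  define f where "f = (\<lambda>t. exp (- (complex_of_real t * c)))"
  define F where "F = (\<lambda>t. - f t / c)"
  have c0: "c \<noteq> 0" using c by auto
  have norm_f: "norm (f t) = exp (- (t * Re c))" for t by (simp add: f_def norm_exp_eq_Re)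
  have f_int: "set_integrable lborel {0<..} f"
    by (rule set_integrable_bound[OF integrable_I0i_exp_mscale[OF c]])
       (auto simp: f_def norm_exp_eq_Re set_borel_measurable_def
             intro!: borel_measurable_continuous_onI continuous_intros)
  have halfline_eq: "set_integrable lborel {0..} f = set_integrable lborel {0<..} f"
      "(LINT t:{0..}|lborel. f t) = (LINT t:{0<..}|lborel. f t)"
    by (rule set_integrable_discrete_difference[where X="{0}"]; force)
       (rule set_integral_discrete_difference[where X="{0}"]; force)
  have F_deriv: "(F has_vector_derivative f t) (at t)" for t
    unfolding F_def f_def using c0
    by (auto intro!: derivative_eq_intros has_vector_derivative_real_field simp: field_simps)
  have "(LBINT t=0..\<infinity>. f t) = 0 - F 0"
  proof (rule interval_integral_FTC_integrable)
    show "((F \<circ> real_of_ereal) \<longlongrightarrow> F 0) (at_right 0)"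
      unfolding zero_ereal_def ereal_tendsto_simps F_def f_def using c0 by (intro tendsto_intros) auto
    have "(f \<longlongrightarrow> 0) at_top"
    proof (rule tendsto_norm_zero_cancel)
      show "((\<lambda>t. norm (f t)) \<longlongrightarrow> 0) at_top" unfolding norm_f using c by real_asymp
    qed
    then have "((\<lambda>t. - (f t / c)) \<longlongrightarrow> - (0 / c)) at_top" using c0 by (intro tendsto_intros)
    then show "((F \<circ> real_of_ereal) \<longlongrightarrow> 0) (at_left \<infinity>)"
      unfolding ereal_tendsto_simps F_def by simp
  qed (use f_int F_deriv in \<open>auto simp: f_def einterval_def greaterThan_def intro!: continuous_intros\<close>)
  then have "(LINT t:{0<..}|lborel. f t) = 1 / c"
    by (simp add: interval_lebesgue_integral_0_infty F_def f_def)
  with f_int halfline_eq show "integrable (restrict_space lborel {0..}) f"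
      "(\<integral>t. f t \<partial>restrict_space lborel {0..}) = 1 / c"
    by (simp_all add: integrable_restrict_space integral_restrict_space set_integrable_def
        set_lebesgue_integral_def)
qed

lemma product_sigma_finite_halfline:
  "product_sigma_finite (\<lambda>_::nat. restrict_space lborel ({0..}::real set))"
  unfolding product_sigma_finite_def
  by (auto intro!: sigma_finite_measure_restrict_space lborel.sigma_finite_measure_axioms)

lemma
  fixes c :: "nat \<Rightarrow> complex"
  assumes c: "\<And>j. j < k \<Longrightarrow> 0 < Re (c j)"
  shows integrable_orthant_exp_neg:
      "integrable (orthant k) (\<lambda>w. \<Prod>j<k. exp (- (complex_of_real (w j) * c j)))"
    and integral_orthant_exp_neg:
      "(\<integral>w. (\<Prod>j<k. exp (- (complex_of_real (w j) * c j))) \<partial>orthant k) = (\<Prod>j<k. 1 / c j)"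
proof -
  interpret product_sigma_finite "\<lambda>_::nat. restrict_space lborel ({0..}::real set)"
    by (rule product_sigma_finite_halfline)
  show "integrable (orthant k) (\<lambda>w. \<Prod>j<k. exp (- (complex_of_real (w j) * c j)))"
    by (rule product_integrable_prod) (auto intro: integrable_exp_neg_halfline c)
  show "(\<integral>w. (\<Prod>j<k. exp (- (complex_of_real (w j) * c j))) \<partial>orthant k) = (\<Prod>j<k. 1 / c j)"
    by (subst product_integral_prod) (auto intro: integrable_exp_neg_halfline c intro!: prod.cong integral_exp_neg_halfline)
qed

lemma integrable_orthant_exp_weight:
  assumes "\<beta> > 0" "\<forall>j<k. r j > 0"
  shows "integrable (orthant k) (\<lambda>w. exp (- (\<beta> * (\<Sum>j<k. w j * r j))))"
proof -
  have "integrable (orthant k) (\<lambda>w. norm (\<Prod>j<k. exp (- (complex_of_real (w j) * char_exponent \<beta> r \<theta> 0 j))))"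
    using assms by (intro integrable_norm integrable_orthant_exp_neg) simp
  then show ?thesis by (simp add: prod_exp_char_exponent norm_mult)
qed

section \<open>Trigonometric polynomials on the torus\<close>

lemma inner_Ints:
  fixes n z :: "real^'d"
  shows "(\<forall>i. n $ i \<in> \<int>) \<Longrightarrow> (\<forall>i. z $ i \<in> \<int>) \<Longrightarrow> n \<bullet> z \<in> \<int>"
  unfolding inner_vec_def by (auto intro!: Ints_sum Ints_mult)

lemma cos_add_2pi_Ints: "m \<in> \<int> \<Longrightarrow> cos (t + 2*pi*m) = cos t"
  and sin_add_2pi_Ints: "m \<in> \<int> \<Longrightarrow> sin (t + 2*pi*m) = sin t"
  by (simp_all add: cos_add sin_add cos_integer_2pi sin_integer_2pi)

lemma torus_test_cos:
  assumes n: "\<forall>i. n $ i \<in> \<int>"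
  shows "torus_test (\<lambda>x::real^'d. cos (2*pi*(n \<bullet> x) + c))"
  unfolding torus_test_def periodic_fn_def
proof (intro conjI allI impI)
  fix x z :: "real^'d" assume "\<forall>i. z $ i \<in> \<int>"
  then have "cos ((2*pi*(n \<bullet> x) + c) + 2*pi*(n \<bullet> z)) = cos (2*pi*(n \<bullet> x) + c)"
    using n by (intro cos_add_2pi_Ints inner_Ints)
  then show "cos (2*pi*(n \<bullet> (x + z)) + c) = cos (2*pi*(n \<bullet> x) + c)"
    by (simp add: inner_add_right algebra_simps)
qed (auto intro!: continuous_intros)

inductive trig_poly :: "(real^'d \<Rightarrow> real) \<Rightarrow> bool" where
  cos: "(\<forall>i. n $ i \<in> \<int>) \<Longrightarrow> trig_poly (\<lambda>x. a * cos (2*pi*(n \<bullet> x) + c))"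
| add: "trig_poly f \<Longrightarrow> trig_poly g \<Longrightarrow> trig_poly (\<lambda>x. f x + g x)"

lemma trig_poly_bounded_continuous:
  "trig_poly f \<Longrightarrow> continuous_on UNIV f \<and> (\<exists>B. \<forall>x. \<bar>f x\<bar> \<le> B)"
proof (induction rule: trig_poly.induct)
  case (cos n a c)
  have "\<bar>a * cos (2*pi*(n \<bullet> x) + c)\<bar> \<le> \<bar>a\<bar>" for x
    by (simp add: abs_mult mult_left_le)
  then show ?case by (auto intro!: continuous_intros)
next
  case (add f g)
  then obtain B1 B2 where "\<forall>x. \<bar>f x\<bar> \<le> B1" "\<forall>x. \<bar>g x\<bar> \<le> B2" by auto
  then have "\<forall>x. \<bar>f x + g x\<bar> \<le> B1 + B2" by (meson abs_triangle_ineq add_mono order_trans)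
  with add show ?case by (auto intro!: continuous_intros)
qed

lemma trig_poly_const: "trig_poly (\<lambda>x::real^'d. a)"
  using trig_poly.cos[of 0 a 0] by simp

lemma trig_poly_mult_cos:
  assumes n: "\<forall>i. n $ i \<in> \<int>"
  shows "trig_poly g \<Longrightarrow> trig_poly (\<lambda>x. (a * cos (2*pi*(n \<bullet> x) + c)) * g x)"
proof (induction rule: trig_poly.induct)
  case (cos m b d)
  have "(a * cos (2*pi*(n \<bullet> x) + c)) * (b * cos (2*pi*(m \<bullet> x) + d)) =
      (a*b/2) * cos (2*pi*((n - m) \<bullet> x) + (c - d)) + (a*b/2) * cos (2*pi*((n + m) \<bullet> x) + (c + d))" for x
  proof -
    have "(2*pi*(n \<bullet> x) + c) - (2*pi*(m \<bullet> x) + d) = 2*pi*((n - m) \<bullet> x) + (c - d)"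
        "(2*pi*(n \<bullet> x) + c) + (2*pi*(m \<bullet> x) + d) = 2*pi*((n + m) \<bullet> x) + (c + d)"
      by (simp_all add: inner_diff_left inner_add_left algebra_simps)
    then show ?thesis
      using cos_times_cos[of "2*pi*(n \<bullet> x) + c" "2*pi*(m \<bullet> x) + d"] by (simp add: field_simps)
  qed
  moreover have "trig_poly (\<lambda>x. (a*b/2) * cos (2*pi*((n - m) \<bullet> x) + (c - d)) +
      (a*b/2) * cos (2*pi*((n + m) \<bullet> x) + (c + d)))"
    using n cos by (intro trig_poly.add trig_poly.cos) auto
  ultimately show ?case by simp
next
  case (add f g)
  then show ?case using trig_poly.add[OF add.IH] by (simp add: distrib_left)
qed

lemma trig_poly_mult: "trig_poly f \<Longrightarrow> trig_poly g \<Longrightarrow> trig_poly (\<lambda>x. f x * g x)"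
proof (induction rule: trig_poly.induct)
  case (cos n a c)
  then show ?case by (rule trig_poly_mult_cos)
next
  case (add f1 f2)
  then show ?case using trig_poly.add[OF add.IH] by (simp add: distrib_right)
qed

lemma trig_poly_sum:
  "finite S \<Longrightarrow> (\<And>i. i \<in> S \<Longrightarrow> trig_poly (f i)) \<Longrightarrow> trig_poly (\<lambda>x. \<Sum>i\<in>S. f i x)"
proof (induction rule: finite_induct)
  case empty
  then show ?case using trig_poly_const[of 0] by simp
next
  case (insert i S)
  then show ?case using trig_poly.add[of "f i" "\<lambda>x. \<Sum>i\<in>S. f i x"] by simp
qed

lemma Basis_vec_Ints: "b \<in> (Basis :: (real^'d) set) \<Longrightarrow> \<forall>i. b $ i \<in> \<int>"
  by (auto simp: Basis_vec_def axis_def)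

text \<open>\<real>^d/\<int>^d embedded as a product of circles in \<real>^2d: polynomials in these coordinates are
  trigonometric polynomials, and continuous periodic functions factor through the embedding.\<close>
definition torus_embedding :: "real^'d \<Rightarrow> (real^'d) \<times> (real^'d)" where
  "torus_embedding x =
     ((\<Sum>b\<in>Basis. cos (2*pi*(x \<bullet> b)) *\<^sub>R b), (\<Sum>b\<in>Basis. sin (2*pi*(x \<bullet> b)) *\<^sub>R b))"

lemma continuous_on_torus_embedding: "continuous_on S torus_embedding"
  unfolding torus_embedding_def by (intro continuous_intros)

lemma trig_poly_linear_embedding:
  fixes L :: "(real^'d) \<times> (real^'d) \<Rightarrow> real"
  assumes L: "bounded_linear L"
  shows "trig_poly (\<lambda>x. L (torus_embedding x))"
proof -
  define L1 where "L1 = (\<lambda>u::real^'d. L (u, 0))"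
  define L2 where "L2 = (\<lambda>u::real^'d. L (0, u))"
  have "linear L1" "linear L2" unfolding L1_def L2_def
    using L by (auto intro!: bounded_linear.linear bounded_linear_compose[OF L, unfolded o_def]
        bounded_linear_Pair bounded_linear_ident bounded_linear_zero)
  moreover have "L (u, v) = L1 u + L2 v" for u v
    unfolding L1_def L2_def using linear_add[OF bounded_linear.linear[OF L], of "(u, 0)" "(0, v)"] by simp
  ultimately have "L (torus_embedding x) =
      (\<Sum>b\<in>Basis. L1 b * cos (2*pi*(b \<bullet> x) + 0)) + (\<Sum>b\<in>Basis. L2 b * cos (2*pi*(b \<bullet> x) + (- (pi/2))))" for x
    unfolding torus_embedding_def by (simp add: linear_sum linear_scale inner_commute cos_diff mult.commute)
  then show ?thesis
    by (simp only:) (intro trig_poly.add trig_poly_sum trig_poly.cos Basis_vec_Ints; simp)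
qed

lemma trig_poly_polynomial_embedding:
  "real_polynomial_function p \<Longrightarrow> trig_poly (\<lambda>x. p (torus_embedding x))"
proof (induction rule: real_polynomial_function.induct)
  case (linear f)
  then show ?case by (rule trig_poly_linear_embedding)
next
  case (const c)
  then show ?case by (rule trig_poly_const)
next
  case (add f g)
  show ?case by (rule trig_poly.add[OF add.IH])
next
  case (mult f g)
  show ?case by (rule trig_poly_mult[OF mult.IH])
qed

lemma inner_sum_Basis_scaleR: "b \<in> Basis \<Longrightarrow> (\<Sum>b'\<in>Basis. g b' *\<^sub>R b') \<bullet> (b::'a::euclidean_space) = g b"
  by (simp add: inner_sum_left inner_Basis if_distrib sum.delta cong: if_cong)

lemma torus_embedding_periodic:
  assumes z: "\<forall>i. z $ i \<in> \<int>"
  shows "torus_embedding (x + z) = torus_embedding (x::real^'d)"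
proof -
  have "z \<bullet> b \<in> \<int>" if "b \<in> Basis" for b
    using inner_Ints[OF Basis_vec_Ints[OF that] z] by (simp add: inner_commute)
  then have "cos (2*pi*((x + z) \<bullet> b)) = cos (2*pi*(x \<bullet> b))"
      "sin (2*pi*((x + z) \<bullet> b)) = sin (2*pi*(x \<bullet> b))" if "b \<in> Basis" for b
    using cos_add_2pi_Ints[of "z \<bullet> b" "2*pi*(x \<bullet> b)"] sin_add_2pi_Ints[of "z \<bullet> b" "2*pi*(x \<bullet> b)"] that
    by (simp_all add: inner_add_left algebra_simps)
  then show ?thesis unfolding torus_embedding_def by (auto intro!: sum.cong)
qed

lemma torus_embedding_eq_imp_Ints:
  assumes "torus_embedding x = torus_embedding (y::real^'d)"
  shows "\<forall>i. (x - y) $ i \<in> \<int>"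
proof
  fix i
  define b :: "real^'d" where "b = axis i 1"
  have b: "b \<in> Basis" unfolding b_def by simp
  have "fst (torus_embedding x) \<bullet> b = fst (torus_embedding y) \<bullet> b"
      "snd (torus_embedding x) \<bullet> b = snd (torus_embedding y) \<bullet> b"
    using assms by auto
  then have "cos (2*pi*(x \<bullet> b)) = cos (2*pi*(y \<bullet> b))" "sin (2*pi*(x \<bullet> b)) = sin (2*pi*(y \<bullet> b))"
    unfolding torus_embedding_def using b by (simp_all add: inner_sum_Basis_scaleR)
  then obtain m :: int where "2*pi*(x \<bullet> b) = 2*pi*(y \<bullet> b) + 2*pi*m"
    using sin_cos_eq_iff by metis
  then have "(2*pi) * (x \<bullet> b - y \<bullet> b - m) = 0" by (simp add: algebra_simps)
  then have "x \<bullet> b - y \<bullet> b = m" by simp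
  moreover have "x \<bullet> b = x $ i" "y \<bullet> b = y $ i" unfolding b_def by (simp_all add: cart_eq_inner_axis)
  ultimately show "(x - y) $ i \<in> \<int>" by simp
qed

lemma exists_unit_cube_Ints_diff: "\<exists>x'\<in>cbox 0 1. \<forall>i. (x - x') $ i \<in> \<int>" for x :: "real^'d"
proof (intro bexI allI)
  let ?x' = "\<chi> i. x $ i - of_int \<lfloor>x $ i\<rfloor>"
  show "(x - ?x') $ i \<in> \<int>" for i by simp
  show "?x' \<in> cbox 0 1" unfolding mem_box_cart
    by (auto simp: of_int_floor_le) (smt (verit) real_of_int_floor_add_one_gt)
qed

lemma range_torus_embedding: "range torus_embedding = torus_embedding ` cbox (0::real^'d) 1"
proof
  show "range torus_embedding \<subseteq> torus_embedding ` cbox 0 1"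
  proof
    fix y assume "y \<in> range torus_embedding"
    then obtain x where x: "y = torus_embedding x" by auto
    obtain x' where "x' \<in> cbox 0 1" "\<forall>i. (x - x') $ i \<in> \<int>"
      using exists_unit_cube_Ints_diff by blast
    with x torus_embedding_periodic[of "x - x'" x'] show "y \<in> torus_embedding ` cbox 0 1" by auto
  qed
qed auto

lemma compact_range_torus_embedding: "compact (range (torus_embedding :: real^'d \<Rightarrow> _))"
  unfolding range_torus_embedding
  by (intro compact_continuous_image continuous_on_torus_embedding compact_cbox)

lemma quotient_map_torus_embedding:
  "quotient_map (top_of_set (cbox 0 1)) (top_of_set (range torus_embedding))
     (torus_embedding :: real^'d \<Rightarrow> _)"
  unfolding quotient_map_def
proof (intro conjI allI impI)
  let ?S = "cbox (0::real^'d) 1"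
  show "torus_embedding ` topspace (top_of_set ?S) = topspace (top_of_set (range torus_embedding))"
    by (simp add: range_torus_embedding)
  fix U assume "U \<subseteq> topspace (top_of_set (range (torus_embedding :: real^'d \<Rightarrow> _)))"
  then have "openin (top_of_set ?S) (?S \<inter> torus_embedding -` U) = openin (top_of_set (range torus_embedding)) U"
    by (intro Abstract_Topology_2.continuous_imp_quotient_map continuous_on_torus_embedding)
      (auto simp: range_torus_embedding)
  moreover have "{x \<in> topspace (top_of_set ?S). torus_embedding (x::real^'d) \<in> U} = ?S \<inter> torus_embedding -` U"
    by auto
  ultimately show "openin (top_of_set ?S) {x \<in> topspace (top_of_set ?S). torus_embedding x \<in> U} =
      openin (top_of_set (range torus_embedding)) U"
    by simp
qed

lemma torus_test_factors_through_embedding: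
  fixes f :: "real^'d \<Rightarrow> real"
  assumes "torus_test f"
  obtains F where "continuous_on (range torus_embedding) F" "\<And>x. F (torus_embedding x) = f x"
proof -
  have fc: "continuous_on UNIV f" and per: "\<And>x z. \<forall>i. z $ i \<in> \<int> \<Longrightarrow> f (x + z) = f x"
    using assms unfolding torus_test_def periodic_fn_def by auto
  have f_eq: "f x = f y" if "torus_embedding x = torus_embedding y" for x y
    using per[OF torus_embedding_eq_imp_Ints[OF that], of y] by simp
  have "continuous_map (top_of_set (cbox 0 1)) euclideanreal f"
    using continuous_on_subset[OF fc] by simp
  then obtain F where F: "continuous_map (top_of_set (range torus_embedding)) euclideanreal F"
    and F_eq: "\<And>x. x \<in> cbox 0 1 \<Longrightarrow> F (torus_embedding x) = f x"
    using quotient_map_lift_exists[OF quotient_map_torus_embedding] f_eq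
    by (metis topspace_euclidean_subtopology)
  show ?thesis
  proof
    show "continuous_on (range torus_embedding) F" using F by simp
    fix x :: "real^'d"
    obtain x' where "x' \<in> cbox 0 1" "\<forall>i. (x - x') $ i \<in> \<int>"
      using exists_unit_cube_Ints_diff[of x] by blast
    then show "F (torus_embedding x) = f x"
      using F_eq torus_embedding_periodic[of "x - x'" x'] per[of "x - x'" x'] by simp
  qed
qed

lemma torus_test_bounded:
  fixes f :: "real^'d \<Rightarrow> real"
  assumes "torus_test f"
  obtains B where "\<And>x. \<bar>f x\<bar> \<le> B"
proof -
  obtain F where F: "continuous_on (range torus_embedding) F" "\<And>x. F (torus_embedding x) = f x"
    using torus_test_factors_through_embedding[OF assms] by blast
  have "bounded (F ` range torus_embedding)"
    by (intro compact_imp_bounded compact_continuous_image F(1) compact_range_torus_embedding)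
  then obtain B where "\<forall>y\<in>range torus_embedding. norm (F y) \<le> B"
    by (auto simp: bounded_iff)
  with F(2) that show ?thesis by (metis rangeI real_norm_def)
qed

lemma trig_poly_dense:
  fixes f :: "real^'d \<Rightarrow> real"
  assumes "torus_test f" "0 < e"
  obtains h where "trig_poly h" "\<And>x. \<bar>f x - h x\<bar> < e"
proof -
  obtain F where F: "continuous_on (range torus_embedding) F" "\<And>x. F (torus_embedding x) = f x"
    using torus_test_factors_through_embedding[OF assms(1)] by blast
  obtain g where "polynomial_function g" "\<forall>y\<in>range torus_embedding. norm (F y - g y) < e"
    using Stone_Weierstrass_polynomial_function[OF compact_range_torus_embedding F(1) assms(2)] by blast
  then show ?thesis
    using F(2) by (intro that[of "\<lambda>x. g (torus_embedding x)"] trig_poly_polynomial_embedding)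
      (auto simp: real_polynomial_function_eq)
qed

lemma trig_poly_approx_seq:
  fixes f :: "real^'d \<Rightarrow> real"
  assumes "torus_test f"
  obtains h B where "\<And>m. trig_poly (h m)" "\<And>m x. \<bar>h m x\<bar> \<le> B" "\<And>x. (\<lambda>m. h m x) \<longlonglongrightarrow> f x"
proof -
  obtain B where B: "\<And>x. \<bar>f x\<bar> \<le> B" using torus_test_bounded[OF assms] by blast
  have "\<exists>h. trig_poly h \<and> (\<forall>x. \<bar>f x - h x\<bar> < 1 / (real m + 1))" for m
    by (rule trig_poly_dense[OF assms, of "1 / (real m + 1)"]) auto
  then obtain h where h: "\<And>m. trig_poly (h m)" and close: "\<And>m x. \<bar>f x - h m x\<bar> < 1 / (real m + 1)"
    by metis
  show ?thesis
  proof (rule that[OF h])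
    show "\<bar>h m x\<bar> \<le> B + 1" for m x
      using close[of x m] B[of x] by (smt (verit) divide_le_eq_1_pos of_nat_0_le_iff)
    show "(\<lambda>m. h m x) \<longlonglongrightarrow> f x" for x
    proof (rule tendsto_dist_iff[THEN iffD2], rule Lim_null_comparison)
      show "\<forall>\<^sub>F m in sequentially. norm (dist (h m x) (f x)) \<le> 1 / (real m + 1)"
        using close[of x] by (intro always_eventually allI) (simp add: dist_real_def abs_minus_commute less_imp_le)
      show "(\<lambda>m. 1 / (real m + 1)) \<longlonglongrightarrow> 0"
        using LIMSEQ_inverse_real_of_nat by (simp add: inverse_eq_divide add.commute)
    qed
  qed
qed

section \<open>The inversion formula\<close>

definition laplace_integrand ::
  "(real^'d) measure \<Rightarrow> real \<Rightarrow> (nat \<Rightarrow> real) \<Rightarrow> (nat \<Rightarrow> real^'d) \<Rightarrow> nat \<Rightarrow> (real^'d \<Rightarrow> real)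
     \<Rightarrow> (nat \<Rightarrow> real) \<Rightarrow> real" where
  "laplace_integrand \<mu> \<beta> r \<theta> k f w =
     exp (- (\<beta> * (\<Sum>j<k. w j * r j))) * (\<integral>x. f (x + (\<Sum>j<k. w j *\<^sub>R \<theta> j)) \<partial>\<mu>)"

lemma laplace_integrand_cos:
  fixes \<mu> :: "(real^'d) measure"
  assumes "finite_measure \<mu>" "sets \<mu> = sets borel"
  shows "laplace_integrand \<mu> \<beta> r \<theta> k (\<lambda>x. a * cos (2*pi*(n \<bullet> x) + c)) w =
    Re (complex_of_real a * cis c * fourier_coeff n 0 (\<lambda>g. \<integral>x. g x \<partial>\<mu>) *
        (\<Prod>j<k. exp (- (complex_of_real (w j) * char_exponent \<beta> r \<theta> n j))))"
proof -
  define y where "y = (\<Sum>j<k. w j *\<^sub>R \<theta> j)"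
  define Z where "Z = fourier_coeff n 0 (\<lambda>g. \<integral>x. g x \<partial>\<mu>)"
  have "integrable \<mu> (\<lambda>x. cos (2*pi*(n \<bullet> x) + c'))" for c'
    by (rule integrable_bounded_continuous[OF assms, where B=1]) (auto intro!: continuous_intros)
  then have "(\<integral>x. a * cos (2*pi*(n \<bullet> (x + y)) + c) \<partial>\<mu>) =
      a * (\<integral>x. cos (2*pi*(n \<bullet> x) + (c + 2*pi*(n \<bullet> y))) \<partial>\<mu>)"
    by (simp add: inner_add_right algebra_simps)
  also have "(\<integral>x. cos (2*pi*(n \<bullet> x) + (c + 2*pi*(n \<bullet> y))) \<partial>\<mu>) = Re (cis (c + 2*pi*(n \<bullet> y)) * Z)"
    unfolding Z_def by (simp only: fourier_coeff_integral[OF assms, symmetric] Re_fourier_coeff)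
  finally have shifted: "(\<integral>x. a * cos (2*pi*(n \<bullet> (x + y)) + c) \<partial>\<mu>) = a * Re (cis (c + 2*pi*(n \<bullet> y)) * Z)" .
  define E where "E = exp (- (\<beta> * (\<Sum>j<k. w j * r j)))"
  have regroup: "complex_of_real a * cis c * Z * (complex_of_real E * cis (2*pi*(n \<bullet> y))) =
      complex_of_real (E * a) * (cis (c + 2*pi*(n \<bullet> y)) * Z)"
    by (simp only: cis_mult[symmetric] of_real_mult mult_ac)
  show ?thesis
    unfolding laplace_integrand_def prod_exp_char_exponent y_def[symmetric] Z_def[symmetric]
      E_def[symmetric] shifted regroup
    by simp
qed

lemma integral_eq_laplace_cos:
  fixes \<nu> \<mu> :: "(real^'d) measure" and a c :: real
  assumes \<nu>: "finite_measure \<nu>" "sets \<nu> = sets borel"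
    and \<mu>: "finite_measure \<mu>" "sets \<mu> = sets borel"
    and \<beta>: "\<beta> > 0" and r: "\<forall>j<k. r j > 0"
    and fourier: "fourier_coeff n 0 (\<lambda>g. \<integral>x. g x \<partial>\<mu>) =
      (\<Prod>j<k. char_exponent \<beta> r \<theta> n j) * fourier_coeff n 0 (\<lambda>g. \<integral>x. g x \<partial>\<nu>)"
  defines "f \<equiv> \<lambda>x. a * cos (2*pi*(n \<bullet> x) + c)"
  shows "integrable (orthant k) (laplace_integrand \<mu> \<beta> r \<theta> k f)
     \<and> (\<integral>x. f x \<partial>\<nu>) = (\<integral>w. laplace_integrand \<mu> \<beta> r \<theta> k f w \<partial>orthant k)"
proof -
  define e where "e = char_exponent \<beta> r \<theta> n"
  define Z\<nu> where "Z\<nu> = fourier_coeff n 0 (\<lambda>g. \<integral>x. g x \<partial>\<nu>)"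
  define K where "K = complex_of_real a * cis c * fourier_coeff n 0 (\<lambda>g. \<integral>x. g x \<partial>\<mu>)"
  have e_pos: "\<And>j. j < k \<Longrightarrow> 0 < Re (e j)" using \<beta> r by (simp add: e_def)
  then have "(\<Prod>j<k. e j) \<noteq> 0"
    by (simp add: prod_zero_iff) (metis lessThan_iff less_irrefl zero_complex.sel(1))
  then have K_div: "K / (\<Prod>j<k. e j) = complex_of_real a * cis c * Z\<nu>"
    by (simp add: K_def fourier Z\<nu>_def e_def)
  have integrand: "laplace_integrand \<mu> \<beta> r \<theta> k f =
      (\<lambda>w. Re (K * (\<Prod>j<k. exp (- (complex_of_real (w j) * e j)))))"
    unfolding K_def e_def f_def by (rule ext) (rule laplace_integrand_cos[OF \<mu>])
  have int: "integrable (orthant k) (\<lambda>w. K * (\<Prod>j<k. exp (- (complex_of_real (w j) * e j))))"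
    using integrable_orthant_exp_neg[OF e_pos] by simp
  have "(\<integral>w. laplace_integrand \<mu> \<beta> r \<theta> k f w \<partial>orthant k) =
      Re (\<integral>w. K * (\<Prod>j<k. exp (- (complex_of_real (w j) * e j))) \<partial>orthant k)"
    unfolding integrand by (rule integral_Re[OF int])
  also have "\<dots> = Re (K / (\<Prod>j<k. e j))"
    by (simp add: integral_orthant_exp_neg[OF e_pos] prod_dividef)
  also have "\<dots> = a * Re (fourier_coeff n c (\<lambda>g. \<integral>x. g x \<partial>\<nu>))"
    unfolding K_div Z\<nu>_def fourier_coeff_integral[OF \<nu>, of n c] by (simp add: mult.assoc)
  also have "\<dots> = (\<integral>x. f x \<partial>\<nu>)"
    by (simp add: f_def)
  moreover have "integrable (orthant k) (laplace_integrand \<mu> \<beta> r \<theta> k f)"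
    unfolding integrand using int by (rule integrable_Re)
  ultimately show ?thesis by simp
qed

lemma integral_eq_laplace_trig_poly:
  fixes \<nu> \<mu> :: "(real^'d) measure"
  assumes \<nu>: "finite_measure \<nu>" "sets \<nu> = sets borel"
    and \<mu>: "finite_measure \<mu>" "sets \<mu> = sets borel"
    and \<beta>: "\<beta> > 0" and r: "\<forall>j<k. r j > 0"
    and \<mu>_lim: "\<forall>f. torus_test f \<longrightarrow>
        has_iter_lim k (\<lambda>s. (1 / (\<Prod>j<k. s j)) * prod_ops \<beta> r \<theta> s k (\<lambda>g. \<integral>x. g x \<partial>\<nu>) f)
          (\<integral>x. f x \<partial>\<mu>)"
  shows "trig_poly f \<Longrightarrow> integrable (orthant k) (laplace_integrand \<mu> \<beta> r \<theta> k f)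
     \<and> (\<integral>x. f x \<partial>\<nu>) = (\<integral>w. laplace_integrand \<mu> \<beta> r \<theta> k f w \<partial>orthant k)"
proof (induction rule: trig_poly.induct)
  case (cos n a c)
  show ?case
    by (rule integral_eq_laplace_cos[OF \<nu> \<mu> \<beta> r
          fourier_coeff_iter_lim[OF \<nu> \<mu> \<mu>_lim[rule_format, OF torus_test_cos[OF cos]]]])
next
  case (add f g)
  obtain Bf Bg where f: "continuous_on UNIV f" "\<And>x. \<bar>f x\<bar> \<le> Bf"
    and g: "continuous_on UNIV g" "\<And>x. \<bar>g x\<bar> \<le> Bg"
    using trig_poly_bounded_continuous[OF add.hyps(1)] trig_poly_bounded_continuous[OF add.hyps(2)]
    by blast
  have "laplace_integrand \<mu> \<beta> r \<theta> k (\<lambda>x. f x + g x) =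
      (\<lambda>w. laplace_integrand \<mu> \<beta> r \<theta> k f w + laplace_integrand \<mu> \<beta> r \<theta> k g w)"
    using integrable_shift_bounded_continuous[OF \<mu> f] integrable_shift_bounded_continuous[OF \<mu> g]
    by (simp add: laplace_integrand_def distrib_left fun_eq_iff)
  moreover have "(\<integral>x. f x + g x \<partial>\<nu>) = (\<integral>x. f x \<partial>\<nu>) + (\<integral>x. g x \<partial>\<nu>)"
    using integrable_bounded_continuous[OF \<nu> f] integrable_bounded_continuous[OF \<nu> g] by simp
  ultimately show ?case using add.IH by simp
qed

lemma laplace_integrand_tendsto:
  fixes \<mu> :: "(real^'d) measure"
  assumes \<mu>: "finite_measure \<mu>" "sets \<mu> = sets borel" and f: "continuous_on UNIV f"
    and h: "\<And>m. continuous_on UNIV (h m)" "\<And>m x. \<bar>h m x\<bar> \<le> B" "\<And>x. (\<lambda>m. h m x) \<longlonglongrightarrow> f x"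
  shows "(\<lambda>m. laplace_integrand \<mu> \<beta> r \<theta> k (h m) w) \<longlonglongrightarrow> laplace_integrand \<mu> \<beta> r \<theta> k f w"
proof -
  define y where "y = (\<Sum>j<k. w j *\<^sub>R \<theta> j)"
  have "(\<lambda>m. \<integral>x. h m (x + y) \<partial>\<mu>) \<longlonglongrightarrow> (\<integral>x. f (x + y) \<partial>\<mu>)"
    by (rule integral_tendsto_bounded_continuous[OF \<mu>])
      (auto intro!: continuous_on_compose2[OF f] continuous_on_compose2[OF h(1)] continuous_intros h(2,3))
  then show ?thesis unfolding laplace_integrand_def y_def[symmetric] by (intro tendsto_intros)
qed

lemma abs_laplace_integrand_le:
  fixes \<mu> :: "(real^'d) measure"
  assumes \<mu>: "finite_measure \<mu>" "sets \<mu> = sets borel"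
    and g: "continuous_on UNIV g" "\<And>x. \<bar>g x\<bar> \<le> B"
  shows "\<bar>laplace_integrand \<mu> \<beta> r \<theta> k g w\<bar> \<le> exp (- (\<beta> * (\<Sum>j<k. w j * r j))) * (B * measure \<mu> UNIV)"
proof -
  have "\<bar>\<integral>x. g (x + (\<Sum>j<k. w j *\<^sub>R \<theta> j)) \<partial>\<mu>\<bar> \<le> B * measure \<mu> (space \<mu>)"
    by (rule abs_integral_le_bound[OF \<mu>(1) integrable_shift_bounded_continuous[OF \<mu> g]]) (rule g(2))
  then show ?thesis
    unfolding laplace_integrand_def sets_eq_imp_space_eq[OF \<mu>(2)]
    by (simp add: abs_mult mult_left_mono)
qed

lemma integral_eq_laplace_limit:
  fixes \<nu> \<mu> :: "(real^'d) measure"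
  assumes \<nu>: "finite_measure \<nu>" "sets \<nu> = sets borel"
    and \<mu>: "finite_measure \<mu>" "sets \<mu> = sets borel"
    and \<beta>: "\<beta> > 0" and r: "\<forall>j<k. r j > 0" and f: "continuous_on UNIV f"
    and h: "\<And>m. continuous_on UNIV (h m)" "\<And>m x. \<bar>h m x\<bar> \<le> B" "\<And>x. (\<lambda>m. h m x) \<longlonglongrightarrow> f x"
    and h_eq: "\<And>m. integrable (orthant k) (laplace_integrand \<mu> \<beta> r \<theta> k (h m))
       \<and> (\<integral>x. h m x \<partial>\<nu>) = (\<integral>w. laplace_integrand \<mu> \<beta> r \<theta> k (h m) w \<partial>orthant k)"
  shows "(\<integral>x. f x \<partial>\<nu>) = (\<integral>w. laplace_integrand \<mu> \<beta> r \<theta> k f w \<partial>orthant k)"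
proof -
  have h_meas: "laplace_integrand \<mu> \<beta> r \<theta> k (h m) \<in> borel_measurable (orthant k)" for m
    using h_eq borel_measurable_integrable by blast
  note lim = laplace_integrand_tendsto[OF \<mu> f h]
  have "(\<lambda>m. \<integral>w. laplace_integrand \<mu> \<beta> r \<theta> k (h m) w \<partial>orthant k)
      \<longlonglongrightarrow> (\<integral>w. laplace_integrand \<mu> \<beta> r \<theta> k f w \<partial>orthant k)"
  proof (rule integral_dominated_convergence)
    show "laplace_integrand \<mu> \<beta> r \<theta> k f \<in> borel_measurable (orthant k)"
      by (rule borel_measurable_LIMSEQ_metric[OF h_meas lim])
    show "integrable (orthant k) (\<lambda>w. exp (- (\<beta> * (\<Sum>j<k. w j * r j))) * (B * measure \<mu> UNIV))"
      using integrable_orthant_exp_weight[OF \<beta> r] by simp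
    show "AE w in orthant k. norm (laplace_integrand \<mu> \<beta> r \<theta> k (h m) w) \<le>
        exp (- (\<beta> * (\<Sum>j<k. w j * r j))) * (B * measure \<mu> UNIV)" for m
      using abs_laplace_integrand_le[OF \<mu> h(1,2)] by simp
  qed (use h_meas lim in simp_all)
  moreover have "(\<lambda>m. \<integral>x. h m x \<partial>\<nu>) \<longlonglongrightarrow> (\<integral>x. f x \<partial>\<nu>)"
    by (rule integral_tendsto_bounded_continuous[OF \<nu> f h])
  ultimately show ?thesis using h_eq LIMSEQ_unique by simp
qed

theorem mainTheorem17:
  fixes \<theta> :: "nat \<Rightarrow> real^'d" and \<beta> :: real and r :: "nat \<Rightarrow> real" and k :: nat
    and \<nu> \<mu> :: "(real^'d) measure"
  assumes theta_nonneg: "\<forall>j<k. \<forall>i. 0 \<le> \<theta> j $ i"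
    and beta_pos: "\<beta> > 0"
    and r_pos: "\<forall>j<k. r j > 0"
    and nu_sets: "sets \<nu> = sets borel"
    and nu_finite: "finite_measure \<nu>"
    and nu_mass: "measure \<nu> UNIV = (\<Prod>j<k. 1 / (\<beta> * r j))"
    and nu_pos: "\<forall>s. (\<forall>j<k. 0 \<le> s j) \<longrightarrow>
        (\<forall>f. torus_test f \<and> (\<forall>x. 0 \<le> f x) \<longrightarrow>
             0 \<le> prod_ops \<beta> r \<theta> s k (\<lambda>g. \<integral>x. g x \<partial>\<nu>) f)"
    and mu_sets: "sets \<mu> = sets borel"
    and mu_finite: "finite_measure \<mu>"
    and mu_def: "\<forall>f. torus_test f \<longrightarrow>
        has_iter_lim k (\<lambda>s. (1 / (\<Prod>j<k. s j)) * prod_ops \<beta> r \<theta> s k (\<lambda>g. \<integral>x. g x \<partial>\<nu>) f)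
          (\<integral>x. f x \<partial>\<mu>)"
  shows "\<forall>f. torus_test f \<longrightarrow>
    (\<integral>x. f x \<partial>\<nu>) =
    (\<integral>w. exp (- (\<beta> * (\<Sum>j<k. w j * r j))) * (\<integral>x. f (x + (\<Sum>j<k. w j *\<^sub>R \<theta> j)) \<partial>\<mu>)
        \<partial>(PiM {..<k} (\<lambda>_. restrict_space lborel {0..})))"
proof (intro allI impI)
  fix f :: "real^'d \<Rightarrow> real"
  assume f: "torus_test f"
  obtain h B where h: "\<And>m. trig_poly (h m)" "\<And>m x. \<bar>h m x\<bar> \<le> B" "\<And>x. (\<lambda>m. h m x) \<longlonglongrightarrow> f x"
    using trig_poly_approx_seq[OF f] by blast
  have "(\<integral>x. f x \<partial>\<nu>) = (\<integral>w. laplace_integrand \<mu> \<beta> r \<theta> k f w \<partial>orthant k)"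
  proof (rule integral_eq_laplace_limit[OF nu_finite nu_sets mu_finite mu_sets beta_pos r_pos _ _ h(2,3)])
    show "continuous_on UNIV f" using f by (simp add: torus_test_def)
    show "continuous_on UNIV (h m)" for m using trig_poly_bounded_continuous[OF h(1)] by blast
    show "integrable (orthant k) (laplace_integrand \<mu> \<beta> r \<theta> k (h m))
        \<and> (\<integral>x. h m x \<partial>\<nu>) = (\<integral>w. laplace_integrand \<mu> \<beta> r \<theta> k (h m) w \<partial>orthant k)" for m
      by (rule integral_eq_laplace_trig_poly[OF nu_finite nu_sets mu_finite mu_sets beta_pos r_pos mu_def h(1)])
  qed
  then show "(\<integral>x. f x \<partial>\<nu>) =
    (\<integral>w. exp (- (\<beta> * (\<Sum>j<k. w j * r j))) * (\<integral>x. f (x + (\<Sum>j<k. w j *\<^sub>R \<theta> j)) \<partial>\<mu>)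
        \<partial>(PiM {..<k} (\<lambda>_. restrict_space lborel {0..})))"
    unfolding laplace_integrand_def .
qed

end
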